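(* Let $\mathcal{B}(n)$ be the set of pairs $(s,t)\in S_n\times S_n$ whose commutator $[s,t]$ is a $3$-cycle, and $\mathcal{A}(n)\subseteq\mathcal{B}(n)$ the subset of those pairs with $\langle s,t\rangle\in\{A_n,S_n\}$. Then $\#\mathcal{A}(n)/\#\mathcal{B}(n)\to 0$ as $n\to\infty$.
   Context: $[s,t]=sts^{-1}t^{-1}$, with permutations composed as functions. *)

theory Defs
  imports "HOL-Algebra.Sym_Groups" Complex_Main
begin

definition perm_comm :: "(nat \<Rightarrow> nat) \<Rightarrow> (nat \<Rightarrow> nat) \<Rightarrow> (nat \<Rightarrow> nat)" where
  "perm_comm s t = s \<circ> t \<circ> Hilbert_Choice.inv s \<circ> Hilbert_Choice.inv t"

definition B_set :: "nat \<Rightarrow> ((nat \<Rightarrow> nat) \<times> (nat \<Rightarrow> nat)) set" where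
  "B_set n = {(s, t). s \<in> carrier (sym_group n) \<and> t \<in> carrier (sym_group n)
                      \<and> perm_comm s t \<in> three_cycles n}"

definition A_set :: "nat \<Rightarrow> ((nat \<Rightarrow> nat) \<times> (nat \<Rightarrow> nat)) set" where
  "A_set n = {(s, t). (s, t) \<in> B_set n \<and>
       (generate (sym_group n) {s, t} = carrier (alt_group n)
        \<or> generate (sym_group n) {s, t} = carrier (sym_group n))}"

end

theory Submission
  imports Defs "HOL-Combinatorics.Orbits" "HOL-Library.Discrete_Functions" "HOL-Real_Asymp.Real_Asymp"
begin

text \<open>
  For fixed $s$, the partners $t$ with $[s,t] = c$ form a coset of the centralizer $C(s)$, so
  $|C(s)| \le \#\{t. (s,t) \in B(n)\} \le n^3 |C(s)|$ whenever the left set is nonempty.  By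
  orbit--stabiliser, summing $|C(s)|$ over one conjugacy class (= one cycle type) gives $n!$.
  Hence both counts reduce to counting cycle types:
  \<^item> (upper bound) If $(s,t) \in A(n)$, the set of points whose $s$-cycle length does not occur
    on the support of $[s,t]$ is invariant under $s$ and $t$, hence under $A_n$, hence empty;
    so $s$ has at most 3 cycle lengths and there are at most $(n+1)^6$ such cycle types, giving
    $\#A(n) \le n^3 (n+1)^6 n!$;
  \<^item> (lower bound) for every $D \subseteq \{3..k\}$ with $(k+1)^2 \le n$ the permutation
    $(1\,2)\prod_{d \in D}(\text{$d$-cycle})$ has partner $(2\,3)$, and these have $2^{k-2}$
    distinct cycle types, giving $\#B(n) \ge 2^{k-2} n!$ with $k \approx \sqrt n$.
\<close>


section \<open>Cycle lengths of permutations\<close>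

lemma funpow_intertwine:
  assumes "\<And>x. w (g x) = g (s x)"
  shows "(w ^^ m) (g x) = g ((s ^^ m) x)"
  by (induction m) (simp_all add: assms)

lemma least_power_eqI:
  assumes "permutation p" "permutation q"
    and "\<And>m. (p ^^ m) a = a \<longleftrightarrow> (q ^^ m) b = b"
  shows "least_power p a = least_power q b"
proof -
  have "(p ^^ least_power q b) a = a"
    using assms(3)[of "least_power q b"] least_power_of_permutation(1)[OF assms(2)] by simp
  hence "least_power p a dvd least_power q b" by (simp add: least_power_dvd[OF assms(1)])
  moreover have "(q ^^ least_power p a) b = b"
    using assms(3)[of "least_power p a"] least_power_of_permutation(1)[OF assms(1)] by simp
  hence "least_power q b dvd least_power p a" by (simp add: least_power_dvd[OF assms(2)])
  ultimately show ?thesis by (rule dvd_antisym)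
qed

lemma least_power_intertwine:
  assumes "permutation s" "permutation w" "inj g" "\<And>x. w (g x) = g (s x)"
  shows "least_power w (g x) = least_power s x"
proof (rule least_power_eqI[OF assms(2,1)])
  fix m
  show "(w ^^ m) (g x) = g x \<longleftrightarrow> (s ^^ m) x = x"
    using funpow_intertwine[of w g s, OF assms(4)] assms(3) by (simp add: inj_eq)
qed

lemma least_power_funpow:
  assumes "permutation s"
  shows "least_power s ((s ^^ i) x) = least_power s x"
proof (rule least_power_intertwine[OF assms assms])
  show "inj (s ^^ i)"
    using bij_is_inj[OF permutation_bijective[OF permutation_funpow[OF assms]]] .
  show "s ((s ^^ i) y) = (s ^^ i) (s y)" for y
    by (rule funpow_swap1)
qed

lemma funpow_mod_least_power:
  assumes "permutation p"
  shows "(p ^^ i) x = (p ^^ (i mod least_power p x)) x"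
  using funpow_mod_eq[OF least_power_of_permutation(1)[OF assms], of i] by simp

lemma inj_on_orbit:
  assumes "permutation p"
  shows "inj_on (\<lambda>i. (p ^^ i) x) {0..<least_power p x}"
  using cycle_of_permutation[OF assms, of x] by (simp add: distinct_map)

lemma funpow_eq_iff_mod:
  assumes "permutation p"
  shows "(p ^^ i) x = (p ^^ j) x \<longleftrightarrow> i mod least_power p x = j mod least_power p x"
proof
  have pos: "least_power p x > 0" using least_power_of_permutation(2)[OF assms] .
  assume "(p ^^ i) x = (p ^^ j) x"
  hence "(p ^^ (i mod least_power p x)) x = (p ^^ (j mod least_power p x)) x"
    using funpow_mod_least_power[OF assms] by metis
  moreover have "i mod least_power p x \<in> {0..<least_power p x}"
    and "j mod least_power p x \<in> {0..<least_power p x}" using pos by auto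
  ultimately show "i mod least_power p x = j mod least_power p x"
    by (rule inj_onD[OF inj_on_orbit[OF assms]])
next
  assume "i mod least_power p x = j mod least_power p x"
  thus "(p ^^ i) x = (p ^^ j) x" using funpow_mod_least_power[OF assms] by metis
qed

lemma orbit_eq_range:
  assumes "permutation p" shows "orbit p x = range (\<lambda>i. (p ^^ i) x)"
  using orbit_altdef_permutation[OF assms] by auto

lemma card_orbit:
  assumes "permutation p" shows "card (orbit p x) = least_power p x"
proof -
  have "orbit p x = (\<lambda>i. (p ^^ i) x) ` {0..<least_power p x}"
    using support_set[OF assms, of x] orbit_eq_range[OF assms] by simp
  thus ?thesis using card_image[OF inj_on_orbit[OF assms]] by simp
qed

lemma least_power_le_card:
  assumes "p permutes S" "finite S" "x \<in> S"
  shows "least_power p x \<le> card S"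
proof -
  have "card (orbit p x) \<le> card S" by (rule card_mono[OF assms(2) permutes_orbit_subset[OF assms(1,3)]])
  thus ?thesis using card_orbit[OF permutes_imp_permutation[OF assms(2,1)]] by simp
qed


section \<open>Commutators and centralizers\<close>

definition perm_centralizer :: "nat \<Rightarrow> (nat \<Rightarrow> nat) \<Rightarrow> (nat \<Rightarrow> nat) set" where
  "perm_centralizer n s = {g. g permutes {1..n} \<and> g \<circ> s = s \<circ> g}"

definition three_partners :: "nat \<Rightarrow> (nat \<Rightarrow> nat) \<Rightarrow> (nat \<Rightarrow> nat) set" where
  "three_partners n s = {t. t permutes {1..n} \<and> perm_comm s t \<in> three_cycles n}"

lemma B_set_Sigma: "B_set n = Sigma {s. s permutes {1..n}} (three_partners n)"
  unfolding B_set_def three_partners_def by (auto simp: sym_group_carrier)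

lemma perm_comm_apply: "perm_comm s t x = s (t (inv' s (inv' t x)))"
  by (simp add: perm_comm_def)

lemma perm_comm_permutes:
  assumes "s permutes S" "t permutes S"
  shows "perm_comm s t permutes S"
  unfolding perm_comm_def by (intro permutes_compose permutes_inv assms)

lemma permutes_inv_cancel:
  assumes "p permutes S"
  shows "p \<circ> (inv' p \<circ> f) = f" "inv' p \<circ> (p \<circ> f) = f"
  by (simp_all add: o_assoc permutes_inv_o[OF assms])

lemma finite_perm_centralizer: "finite (perm_centralizer n s)"
  by (rule finite_subset[OF _ finite_permutations[of "{1..n}"]]) (auto simp: perm_centralizer_def)

lemma finite_three_partners: "finite (three_partners n s)"
  by (rule finite_subset[OF _ finite_permutations[of "{1..n}"]]) (auto simp: three_partners_def)

lemma three_cycles_permute: "c \<in> three_cycles n \<Longrightarrow> c permutes {1..n}"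
  using three_cycles_incl[of n] by (auto simp: alt_group_carrier)

lemma finite_three_cycles: "finite (three_cycles n)"
  by (rule finite_subset[OF _ finite_permutations[of "{1..n}"]]) (use three_cycles_permute in blast, simp)

text \<open>A 3-cycle is determined by a triple of points.\<close>

lemma card_three_cycles: "card (three_cycles n) \<le> n ^ 3"
proof -
  define P where "P = {1..n} \<times> {1..n} \<times> ({1..n} :: nat set)"
  have cover: "three_cycles n \<subseteq> (\<lambda>(a, b, c). cycle_of_list [a, b, c]) ` P"
  proof
    fix p assume "p \<in> three_cycles n"
    then obtain cs where cs: "p = cycle_of_list cs" "length cs = 3" "set cs \<subseteq> {1..n}" by auto
    obtain a b c where abc: "cs = [a, b, c]" using stupid_lemma[OF cs(2)] by blast
    have "p = (\<lambda>(a, b, c). cycle_of_list [a, b, c]) (a, b, c)" using cs(1) abc by simp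
    moreover have "(a, b, c) \<in> P" using cs(3) abc by (simp add: P_def)
    ultimately show "p \<in> (\<lambda>(a, b, c). cycle_of_list [a, b, c]) ` P" by (rule image_eqI)
  qed
  have "finite P" by (simp add: P_def)
  have "card (three_cycles n) \<le> card ((\<lambda>(a, b, c). cycle_of_list [a, b, c]) ` P)"
    by (rule card_mono[OF finite_imageI[OF \<open>finite P\<close>] cover])
  also have "\<dots> \<le> card P" by (rule card_image_le[OF \<open>finite P\<close>])
  also have "\<dots> = n ^ 3" by (simp add: P_def card_cartesian_product power3_eq_cube)
  finally show ?thesis .
qed

lemma perm_comm_right_centralizer:
  assumes "s permutes S" "t permutes S" "g permutes S" "g \<circ> s = s \<circ> g"
  shows "perm_comm s (t \<circ> g) = perm_comm s t"
proof (rule ext)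
  fix x
  have "g (inv' s y) = inv' s (g y)" for y
    using fun_cong[OF assms(4), of "inv' s y"] permutes_inverses[OF assms(1)]
    by (metis comp_apply)
  moreover have "inv' (t \<circ> g) = inv' g \<circ> inv' t"
    using o_inv_distrib[OF permutes_bij[OF assms(2)] permutes_bij[OF assms(3)]] .
  ultimately show "perm_comm s (t \<circ> g) x = perm_comm s t x"
    unfolding perm_comm_apply using permutes_inverses(1)[OF assms(3)] by simp
qed

lemma perm_comm_eq_centralizer:
  assumes "s permutes S" "t permutes S" "t0 permutes S" "perm_comm s t = perm_comm s t0"
  shows "(inv' t0 \<circ> t) \<circ> s = s \<circ> (inv' t0 \<circ> t)"
proof (rule ext)
  fix y
  have "t (inv' s (inv' t x)) = t0 (inv' s (inv' t0 x))" for x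
    using fun_cong[OF assms(4), of x] permutes_inj[OF assms(1)]
    by (simp add: perm_comm_apply inj_eq)
  from this[of "t (s y)"] have "t y = t0 (inv' s (inv' t0 (t (s y))))"
    using permutes_inverses(2)[OF assms(1)] permutes_inverses(2)[OF assms(2)] by simp
  hence "inv' t0 (t y) = inv' s (inv' t0 (t (s y)))"
    by (simp add: permutes_inverses(2)[OF assms(3)])
  hence "s (inv' t0 (t y)) = inv' t0 (t (s y))"
    by (simp add: permutes_inverses(1)[OF assms(1)])
  thus "((inv' t0 \<circ> t) \<circ> s) y = (s \<circ> (inv' t0 \<circ> t)) y" by simp
qed

lemma card_commutator_fibre:
  assumes "s permutes {1..n}"
  shows "card {t. t permutes {1..n} \<and> perm_comm s t = c} \<le> card (perm_centralizer n s)"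
proof (cases "{t. t permutes {1..n} \<and> perm_comm s t = c} = {}")
  case False
  then obtain t0 where t0: "t0 permutes {1..n}" "perm_comm s t0 = c" by auto
  show ?thesis
  proof (rule card_inj_on_le[OF _ _ finite_perm_centralizer])
    show "inj_on (\<lambda>t. inv' t0 \<circ> t) {t. t permutes {1..n} \<and> perm_comm s t = c}"
    proof (rule inj_onI)
      fix x y assume "inv' t0 \<circ> x = inv' t0 \<circ> y"
      hence "t0 \<circ> (inv' t0 \<circ> x) = t0 \<circ> (inv' t0 \<circ> y)" by simp
      thus "x = y" by (simp add: o_assoc permutes_inv_o(1)[OF t0(1)])
    qed
    show "(\<lambda>t. inv' t0 \<circ> t) ` {t. t permutes {1..n} \<and> perm_comm s t = c}
          \<subseteq> perm_centralizer n s"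
    proof clarify
      fix t assume t: "t permutes {1..n}" "c = perm_comm s t"
      have "inv' t0 \<circ> t permutes {1..n}" by (rule permutes_compose[OF t(1) permutes_inv[OF t0(1)]])
      moreover have "(inv' t0 \<circ> t) \<circ> s = s \<circ> (inv' t0 \<circ> t)"
        using perm_comm_eq_centralizer[OF assms t(1) t0(1)] t(2) t0(2) by simp
      ultimately show "inv' t0 \<circ> t \<in> perm_centralizer n s" by (simp add: perm_centralizer_def)
    qed
  qed
next
  case True
  show ?thesis unfolding True by simp
qed

lemma card_three_partners_le:
  assumes "s permutes {1..n}"
  shows "card (three_partners n s) \<le> n ^ 3 * card (perm_centralizer n s)"
proof -
  have "three_partners n s = (\<Union>c\<in>three_cycles n. {t. t permutes {1..n} \<and> perm_comm s t = c})"
    by (auto simp: three_partners_def)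
  hence "card (three_partners n s)
         \<le> (\<Sum>c\<in>three_cycles n. card {t. t permutes {1..n} \<and> perm_comm s t = c})"
    using card_UN_le[OF finite_three_cycles] by simp
  also have "\<dots> \<le> card (three_cycles n) * card (perm_centralizer n s)"
    using sum_mono[OF card_commutator_fibre[OF assms]] by simp
  also have "\<dots> \<le> n ^ 3 * card (perm_centralizer n s)"
    by (rule mult_right_mono[OF card_three_cycles]) simp
  finally show ?thesis .
qed

lemma card_perm_centralizer_le:
  assumes "s permutes {1..n}" "t0 \<in> three_partners n s"
  shows "card (perm_centralizer n s) \<le> card (three_partners n s)"
proof (rule card_inj_on_le[OF _ _ finite_three_partners])
  have t0: "t0 permutes {1..n}" "perm_comm s t0 \<in> three_cycles n"
    using assms(2) by (auto simp: three_partners_def)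
  show "inj_on (\<lambda>g. t0 \<circ> g) (perm_centralizer n s)"
  proof (rule inj_onI)
    fix x y assume "t0 \<circ> x = t0 \<circ> y"
    hence "inv' t0 \<circ> (t0 \<circ> x) = inv' t0 \<circ> (t0 \<circ> y)" by simp
    thus "x = y" by (simp add: o_assoc permutes_inv_o(2)[OF t0(1)])
  qed
  show "(\<lambda>g. t0 \<circ> g) ` perm_centralizer n s \<subseteq> three_partners n s"
  proof clarify
    fix g assume "g \<in> perm_centralizer n s"
    hence g: "g permutes {1..n}" "g \<circ> s = s \<circ> g" by (auto simp: perm_centralizer_def)
    have "t0 \<circ> g permutes {1..n}" by (rule permutes_compose[OF g(1) t0(1)])
    moreover have "perm_comm s (t0 \<circ> g) = perm_comm s t0"
      by (rule perm_comm_right_centralizer[OF assms(1) t0(1) g])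
    ultimately show "t0 \<circ> g \<in> three_partners n s" using t0(2) by (simp add: three_partners_def)
  qed
qed

lemma three_cycles_conj:
  assumes "g permutes {1..n}" "c \<in> three_cycles n"
  shows "g \<circ> c \<circ> inv' g \<in> three_cycles n"
proof -
  obtain cs where cs: "c = cycle_of_list cs" "cycle cs" "length cs = 3" "set cs \<subseteq> {1..n}"
    using assms(2) by auto
  have "g \<circ> c \<circ> inv' g = cycle_of_list (map g cs)"
    using conjugation_of_cycle[OF cs(2) permutes_bij[OF assms(1)]] cs(1) by simp
  moreover have "cycle (map g cs)"
    using cs(2) distinct_map inj_on_subset[OF permutes_inj[OF assms(1)]] by auto
  moreover have "set (map g cs) \<subseteq> {1..n}" using cs(4) permutes_in_image[OF assms(1)] by auto
  ultimately show ?thesis using cs(3) by (intro CollectI exI[of _ "map g cs"]) simp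
qed

lemma perm_comm_conj:
  assumes "g permutes S" "s permutes S" "t permutes S"
  shows "perm_comm (g \<circ> s \<circ> inv' g) (g \<circ> t \<circ> inv' g) = g \<circ> perm_comm s t \<circ> inv' g"
proof -
  have inv_conj: "inv' (g \<circ> p \<circ> inv' g) = g \<circ> inv' p \<circ> inv' g" if "p permutes S" for p :: "nat \<Rightarrow> nat"
  proof (rule inv_unique_comp)
    show "(g \<circ> p \<circ> inv' g) \<circ> (g \<circ> inv' p \<circ> inv' g) = id"
      by (simp add: o_assoc[symmetric] permutes_inv_cancel[OF assms(1)] permutes_inv_cancel[OF that]
          permutes_inv_o(1)[OF assms(1)])
    show "(g \<circ> inv' p \<circ> inv' g) \<circ> (g \<circ> p \<circ> inv' g) = id"
      by (simp add: o_assoc[symmetric] permutes_inv_cancel[OF assms(1)] permutes_inv_cancel[OF that]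
          permutes_inv_o(1)[OF assms(1)])
  qed
  show ?thesis
    unfolding perm_comm_def inv_conj[OF assms(2)] inv_conj[OF assms(3)]
    by (simp add: o_assoc[symmetric] permutes_inv_cancel[OF assms(1)])
qed

lemma three_partners_conj:
  assumes "g permutes {1..n}" "s permutes {1..n}" "t \<in> three_partners n s"
  shows "g \<circ> t \<circ> inv' g \<in> three_partners n (g \<circ> s \<circ> inv' g)"
proof -
  have t: "t permutes {1..n}" "perm_comm s t \<in> three_cycles n"
    using assms(3) by (auto simp: three_partners_def)
  have "g \<circ> t \<circ> inv' g permutes {1..n}" by (intro permutes_compose permutes_inv assms(1) t(1))
  thus ?thesis
    using perm_comm_conj[OF assms(1,2) t(1)] three_cycles_conj[OF assms(1) t(2)]
    by (simp add: three_partners_def)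
qed


section \<open>Cycle types and conjugacy\<close>

lemma funpow_perm_restrict:
  assumes "\<And>z. z \<in> B \<Longrightarrow> f z \<in> B" "z \<in> B"
  shows "(perm_restrict f B ^^ m) z = (f ^^ m) z \<and> (f ^^ m) z \<in> B"
  by (induction m) (auto simp: assms perm_restrict_simps)

lemma least_power_perm_restrict:
  assumes "\<And>z. z \<in> B \<Longrightarrow> f z \<in> B" "z \<in> B"
  shows "least_power (perm_restrict f B) z = least_power f z"
  unfolding least_power_def using funpow_perm_restrict[OF assms] by simp

lemma count_outside_orbit:
  assumes "permutation p" "finite S" "orbit p x \<subseteq> S"
  shows "card {z \<in> S - orbit p x. least_power p z = l}
       = card {z \<in> S. least_power p z = l} - (if l = least_power p x then least_power p x else 0)"
proof -
  have orbit_lp: "least_power p z = least_power p x" if "z \<in> orbit p x" for z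
    using that least_power_funpow[OF assms(1)] orbit_eq_range[OF assms(1)] by auto
  have "{z \<in> S - orbit p x. least_power p z = l} = {z \<in> S. least_power p z = l} - orbit p x"
    by auto
  moreover have "card ({z \<in> S. least_power p z = l} - orbit p x)
       = card {z \<in> S. least_power p z = l} - (if l = least_power p x then least_power p x else 0)"
  proof (cases "l = least_power p x")
    case True
    hence "orbit p x \<subseteq> {z \<in> S. least_power p z = l}" using assms(3) orbit_lp by auto
    thus ?thesis using True card_Diff_subset[OF finite_subset[OF assms(3,2)]]
      card_orbit[OF assms(1)] by simp
  next
    case False
    hence "{z \<in> S. least_power p z = l} - orbit p x = {z \<in> S. least_power p z = l}"
      using orbit_lp by auto
    thus ?thesis using False by simp
  qed
  ultimately show ?thesis by simp
qed

lemma orbit_conjugacy: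
  assumes "permutation p" "permutation q" "least_power p x = least_power q y"
  obtains h where "bij_betw h (orbit p x) (orbit q y)" "\<forall>z\<in>orbit p x. h (p z) = q (h z)"
proof -
  define h where "h = (\<lambda>z. (q ^^ (SOME i. (p ^^ i) x = z)) y)"
  have h_pow: "h ((p ^^ i) x) = (q ^^ i) y" for i
  proof -
    have "(p ^^ (SOME j. (p ^^ j) x = (p ^^ i) x)) x = (p ^^ i) x" by (rule someI[of _ i]) simp
    thus ?thesis
      unfolding h_def using funpow_eq_iff_mod[OF assms(1)] funpow_eq_iff_mod[OF assms(2)] assms(3)
      by metis
  qed
  have "bij_betw h (orbit p x) (orbit q y)"
  proof (rule bij_betw_imageI)
    show "inj_on h (orbit p x)"
    proof (rule inj_onI)
      fix a b assume "a \<in> orbit p x" "b \<in> orbit p x" "h a = h b"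
      then obtain i j where "a = (p ^^ i) x" "b = (p ^^ j) x" "(q ^^ i) y = (q ^^ j) y"
        using orbit_eq_range[OF assms(1)] h_pow by auto
      thus "a = b"
        using funpow_eq_iff_mod[OF assms(1)] funpow_eq_iff_mod[OF assms(2)] assms(3) by metis
    qed
    show "h ` orbit p x = orbit q y"
      unfolding orbit_eq_range[OF assms(1)] orbit_eq_range[OF assms(2)] image_image h_pow ..
  qed
  moreover have "h (p z) = q (h z)" if z: "z \<in> orbit p x" for z
  proof -
    obtain i where "z = (p ^^ i) x" using z unfolding orbit_eq_range[OF assms(1)] by blast
    thus ?thesis using h_pow[of i] h_pow[of "Suc i"] by simp
  qed
  ultimately show ?thesis using that by blast
qed

lemma glue_conjugacies:
  assumes "A \<subseteq> S" "A' \<subseteq> S'" "\<forall>z\<in>A. p z \<in> A" "\<forall>z\<in>S - A. p z \<in> S - A"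
    and "bij_betw h0 A A'" "\<forall>z\<in>A. h0 (p z) = q (h0 z)"
    and "bij_betw h1 (S - A) (S' - A')" "\<forall>z\<in>S - A. h1 (p z) = q (h1 z)"
  shows "\<exists>h. bij_betw h S S' \<and> (\<forall>z\<in>S. h (p z) = q (h z))"
proof -
  define h where "h = (\<lambda>z. if z \<in> A then h0 z else h1 z)"
  have "bij_betw h A A'" using assms(5) by (rule bij_betw_cong[THEN iffD1, rotated]) (simp add: h_def)
  moreover have "bij_betw h (S - A) (S' - A')"
    using assms(7) by (rule bij_betw_cong[THEN iffD1, rotated]) (simp add: h_def)
  ultimately have "bij_betw h (A \<union> (S - A)) (A' \<union> (S' - A'))"
    by (rule bij_betw_combine) blast
  moreover have "A \<union> (S - A) = S" "A' \<union> (S' - A') = S'" using assms(1,2) by auto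
  ultimately have "bij_betw h S S'" by simp
  moreover have "h (p z) = q (h z)" if "z \<in> S" for z
    using that assms(3,4,6,8) by (cases "z \<in> A") (auto simp: h_def)
  ultimately show ?thesis by blast
qed

lemma peel_cycle:
  assumes "finite S" "p permutes S" "x \<in> S"
  defines "R \<equiv> S - orbit p x"
  shows "perm_restrict p R permutes R" "\<forall>z\<in>R. p z \<in> R" "card R < card S"
    and "card {z \<in> R. least_power (perm_restrict p R) z = l}
       = card {z \<in> S. least_power p z = l} - (if l = least_power p x then least_power p x else 0)"
proof -
  have pp: "permutation p" by (rule permutes_imp_permutation[OF assms(1,2)])
  have cyc: "cyclic_on p (orbit p x)" by (rule cyclic_on_orbit[OF assms(2,1)])
  show "perm_restrict p R permutes R" unfolding R_def by (rule perm_restrict_diff_cyclic[OF assms(2) cyc])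
  show closed: "\<forall>z\<in>R. p z \<in> R"
  proof
    fix z assume z: "z \<in> R"
    have "p z \<in> S" using permutes_in_image[OF assms(2)] z by (simp add: R_def)
    moreover have "p z \<notin> orbit p x" using cyclic_on_f_in[OF assms(2) cyc, of z] z by (auto simp: R_def)
    ultimately show "p z \<in> R" by (simp add: R_def)
  qed
  have "x \<in> orbit p x" by (rule permutation_self_in_orbit[OF pp])
  hence "R \<subset> S" using assms(3) by (auto simp: R_def)
  thus "card R < card S" by (rule psubset_card_mono[OF assms(1)])
  have "least_power (perm_restrict p R) z = least_power p z" if "z \<in> R" for z
    by (rule least_power_perm_restrict) (use closed that in auto)
  hence "{z \<in> R. least_power (perm_restrict p R) z = l} = {z \<in> R. least_power p z = l}" by auto
  moreover have "card {z \<in> R. least_power p z = l}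
       = card {z \<in> S. least_power p z = l} - (if l = least_power p x then least_power p x else 0)"
    unfolding R_def by (rule count_outside_orbit[OF pp assms(1) permutes_orbit_subset[OF assms(2,3)]])
  ultimately show "card {z \<in> R. least_power (perm_restrict p R) z = l}
       = card {z \<in> S. least_power p z = l} - (if l = least_power p x then least_power p x else 0)"
    by simp
qed

lemma equal_cycle_counts_conjugate:
  fixes p q :: "'a \<Rightarrow> 'a"
  assumes "finite S" "finite S'" "p permutes S" "q permutes S'"
    and "\<And>l. card {x \<in> S. least_power p x = l} = card {x \<in> S'. least_power q x = l}"
  shows "\<exists>h. bij_betw h S S' \<and> (\<forall>x\<in>S. h (p x) = q (h x))"
  using assms
proof (induction "card S" arbitrary: S S' p q rule: less_induct)
  case less
  note fin = less.prems(1,2) and perm = less.prems(3,4) and counts = less.prems(5)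
  show ?case
  proof (cases "S = {}")
    case True
    have "S' = {}"
    proof (rule ccontr)
      assume "S' \<noteq> {}"
      then obtain y where "y \<in> S'" by auto
      hence "card {x \<in> S'. least_power q x = least_power q y} > 0"
        using fin(2) by (subst card_gt_0_iff) auto
      thus False using counts[of "least_power q y"] True by simp
    qed
    thus ?thesis using True by (simp add: bij_betw_def)
  next
    case False
    then obtain x where x: "x \<in> S" by auto
    have "card {z \<in> S. least_power p z = least_power p x} > 0"
      using x fin(1) by (subst card_gt_0_iff) auto
    hence "card {z \<in> S'. least_power q z = least_power p x} > 0"
      using counts[of "least_power p x"] by simp
    hence "{z \<in> S'. least_power q z = least_power p x} \<noteq> {}" by (metis card.empty less_irrefl)
    then obtain y where y: "y \<in> S'" "least_power q y = least_power p x" by blast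
    have pp: "permutation p" "permutation q"
      using permutes_imp_permutation[OF fin(1) perm(1)] permutes_imp_permutation[OF fin(2) perm(2)] .
    obtain h0 where h0: "bij_betw h0 (orbit p x) (orbit q y)" "\<forall>z\<in>orbit p x. h0 (p z) = q (h0 z)"
      by (rule orbit_conjugacy[OF pp y(2)[symmetric]])
    define A A' where "A = orbit p x" and "A' = orbit q y"
    note peel_p = peel_cycle[OF fin(1) perm(1) x, folded A_def]
    note peel_q = peel_cycle[OF fin(2) perm(2) y(1), folded A'_def]
    have counts': "card {z \<in> S - A. least_power (perm_restrict p (S - A)) z = l}
        = card {z \<in> S' - A'. least_power (perm_restrict q (S' - A')) z = l}" for l
      using peel_p(4)[of l] peel_q(4)[of l] counts[of l] y(2) by simp
    obtain h1 where h1: "bij_betw h1 (S - A) (S' - A')"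
      "\<forall>z\<in>S - A. h1 (perm_restrict p (S - A) z) = perm_restrict q (S' - A') (h1 z)"
      using less.hyps[OF peel_p(3) finite_Diff[OF fin(1)] finite_Diff[OF fin(2)] peel_p(1) peel_q(1)
          counts'] by blast
    have "h1 (p z) = q (h1 z)" if z: "z \<in> S - A" for z
    proof -
      have "h1 z \<in> S' - A'" using bij_betwE[OF h1(1)] z by blast
      hence "perm_restrict q (S' - A') (h1 z) = q (h1 z)" by (rule perm_restrict_simps(1))
      moreover have "perm_restrict p (S - A) z = p z" using z by (rule perm_restrict_simps(1))
      ultimately show ?thesis using h1(2) z by metis
    qed
    moreover have "\<forall>z\<in>A. p z \<in> A" unfolding A_def by (simp add: orbit.step)
    ultimately show ?thesis
      using glue_conjugacies[OF permutes_orbit_subset[OF perm(1) x, folded A_def]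
            permutes_orbit_subset[OF perm(2) y(1), folded A'_def] _ peel_p(2) h0[folded A_def A'_def]
            h1(1)] by blast
  qed
qed

definition cycle_type :: "nat \<Rightarrow> (nat \<Rightarrow> nat) \<Rightarrow> nat \<Rightarrow> nat" where
  "cycle_type n s l = card {x \<in> {1..n}. least_power s x = l}"

definition conjugators :: "nat \<Rightarrow> (nat \<Rightarrow> nat) \<Rightarrow> (nat \<Rightarrow> nat) \<Rightarrow> (nat \<Rightarrow> nat) set" where
  "conjugators n s0 s = {w. w permutes {1..n} \<and> w \<circ> s0 = s \<circ> w}"

lemma conjugate_eq:
  assumes "w permutes S" "w \<circ> s0 = s \<circ> w"
  shows "s = w \<circ> s0 \<circ> inv' w"
proof -
  have "s = s \<circ> (w \<circ> inv' w)" by (simp add: permutes_inv_o(1)[OF assms(1)])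
  also have "\<dots> = w \<circ> s0 \<circ> inv' w" using assms(2) by (simp add: o_assoc)
  finally show ?thesis .
qed

lemma cycle_type_intertwine:
  assumes "g permutes {1..n}" "s permutes {1..n}" "w permutes {1..n}" "w \<circ> g = g \<circ> s"
  shows "cycle_type n w = cycle_type n s"
proof
  fix l
  have lp: "least_power w (g x) = least_power s x" for x
    by (rule least_power_intertwine[OF permutes_imp_permutation[OF _ assms(2)]
          permutes_imp_permutation[OF _ assms(3)] permutes_inj[OF assms(1)]])
       (use fun_cong[OF assms(4)] in auto)
  have "{y \<in> {1..n}. least_power w y = l} = g ` {x \<in> {1..n}. least_power s x = l}"
  proof
    show "g ` {x \<in> {1..n}. least_power s x = l} \<subseteq> {y \<in> {1..n}. least_power w y = l}"
      using lp permutes_in_image[OF assms(1)] by auto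
    show "{y \<in> {1..n}. least_power w y = l} \<subseteq> g ` {x \<in> {1..n}. least_power s x = l}"
    proof
      fix y assume y: "y \<in> {y \<in> {1..n}. least_power w y = l}"
      have "y = g (inv' g y)" using permutes_inverses(1)[OF assms(1)] by simp
      moreover have "inv' g y \<in> {1..n}"
        using y permutes_in_image[OF permutes_inv[OF assms(1)]] by auto
      moreover have "least_power s (inv' g y) = l"
        using y lp[of "inv' g y"] permutes_inverses(1)[OF assms(1)] by simp
      ultimately show "y \<in> g ` {x \<in> {1..n}. least_power s x = l}" by blast
    qed
  qed
  thus "cycle_type n w l = cycle_type n s l"
    unfolding cycle_type_def
    using card_image[OF inj_on_subset[OF permutes_inj[OF assms(1)]]] by simp
qed

lemma cycle_type_conjugate:
  assumes "g permutes {1..n}" "s permutes {1..n}"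
  shows "cycle_type n (g \<circ> s \<circ> inv' g) = cycle_type n s"
proof (rule cycle_type_intertwine[OF assms(1,2)])
  show "g \<circ> s \<circ> inv' g permutes {1..n}" by (intro permutes_compose permutes_inv assms)
  show "g \<circ> s \<circ> inv' g \<circ> g = g \<circ> s"
    by (simp add: o_assoc[symmetric] permutes_inv_o(2)[OF assms(1)])
qed

lemma cycle_type_eq_conjugate:
  assumes "s0 permutes {1..n}" "s permutes {1..n}" "cycle_type n s = cycle_type n s0"
  shows "\<exists>h. h permutes {1..n} \<and> h \<circ> s0 = s \<circ> h"
proof -
  have "card {x \<in> {1..n}. least_power s0 x = l} = card {x \<in> {1..n}. least_power s x = l}" for l
    using fun_cong[OF assms(3), of l] by (simp add: cycle_type_def)
  then obtain h where h: "bij_betw h {1..n} {1..n}" "\<forall>x\<in>{1..n}. h (s0 x) = s (h x)"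
    using equal_cycle_counts_conjugate[OF finite_atLeastAtMost finite_atLeastAtMost assms(1,2)]
    by blast
  define h' where "h' = (\<lambda>z. if z \<in> {1..n} then h z else z)"
  have "bij_betw h' {1..n} {1..n}"
    using h(1) by (rule bij_betw_cong[THEN iffD1, rotated]) (simp add: h'_def)
  hence "h' permutes {1..n}" by (rule bij_imp_permutes) (auto simp: h'_def)
  moreover have "h' \<circ> s0 = s \<circ> h'"
  proof
    fix z show "(h' \<circ> s0) z = (s \<circ> h') z"
    proof (cases "z \<in> {1..n}")
      case True
      thus ?thesis using h(2) permutes_in_image[OF assms(1), of z] by (simp add: h'_def)
    next
      case False
      thus ?thesis using permutes_not_in[OF assms(1) False] permutes_not_in[OF assms(2) False]
        by (auto simp: h'_def)
    qed
  qed
  ultimately show ?thesis by blast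
qed

lemma card_conjugators:
  assumes "h permutes {1..n}" "h \<circ> s0 = s \<circ> h"
  shows "card (conjugators n s0 s) = card (perm_centralizer n s)"
proof -
  have "bij_betw (\<lambda>g. g \<circ> h) (perm_centralizer n s) (conjugators n s0 s)"
  proof (rule bij_betw_byWitness[where f' = "\<lambda>w. w \<circ> inv' h"])
    show "\<forall>g\<in>perm_centralizer n s. g \<circ> h \<circ> inv' h = g"
      by (simp add: o_assoc[symmetric] permutes_inv_o(1)[OF assms(1)])
    show "\<forall>w\<in>conjugators n s0 s. w \<circ> inv' h \<circ> h = w"
      by (simp add: o_assoc[symmetric] permutes_inv_o(2)[OF assms(1)])
    show "(\<lambda>g. g \<circ> h) ` perm_centralizer n s \<subseteq> conjugators n s0 s"
    proof clarify
      fix g assume "g \<in> perm_centralizer n s"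
      hence g: "g permutes {1..n}" "g \<circ> s = s \<circ> g" by (auto simp: perm_centralizer_def)
      have "g \<circ> h \<circ> s0 = g \<circ> s \<circ> h" using assms(2) by (simp add: o_assoc[symmetric])
      also have "\<dots> = s \<circ> (g \<circ> h)" using g(2) by (simp add: o_assoc)
      finally show "g \<circ> h \<in> conjugators n s0 s"
        using permutes_compose[OF assms(1) g(1)] by (simp add: conjugators_def)
    qed
    show "(\<lambda>w. w \<circ> inv' h) ` conjugators n s0 s \<subseteq> perm_centralizer n s"
    proof clarify
      fix w assume "w \<in> conjugators n s0 s"
      hence w: "w permutes {1..n}" "w \<circ> s0 = s \<circ> w" by (auto simp: conjugators_def)
      have "s = h \<circ> s0 \<circ> inv' h" by (rule conjugate_eq[OF assms])
      hence "w \<circ> inv' h \<circ> s = w \<circ> s0 \<circ> inv' h"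
        by (simp add: o_assoc[symmetric] permutes_inv_cancel(2)[OF assms(1)])
      also have "\<dots> = s \<circ> (w \<circ> inv' h)" using w(2) by (simp add: o_assoc)
      finally show "w \<circ> inv' h \<in> perm_centralizer n s"
        using permutes_compose[OF permutes_inv[OF assms(1)] w(1)]
        by (simp add: perm_centralizer_def)
    qed
  qed
  from bij_betw_same_card[OF this] show ?thesis by simp
qed

lemma conjugators_disjoint:
  assumes "s \<noteq> s'"
  shows "conjugators n s0 s \<inter> conjugators n s0 s' = {}"
proof (rule ccontr)
  assume "conjugators n s0 s \<inter> conjugators n s0 s' \<noteq> {}"
  then obtain w where "w permutes {1..n}" "w \<circ> s0 = s \<circ> w" "w \<circ> s0 = s' \<circ> w"
    by (auto simp: conjugators_def)
  hence "s = s'" using conjugate_eq by metis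
  thus False using assms by contradiction
qed

text \<open>Orbit--stabiliser: summing the centralizer orders over one conjugacy class gives $n!$,
  since every permutation conjugates $s_0$ to exactly one member of the class.\<close>

lemma sum_centralizer_type_class:
  assumes s0: "s0 permutes {1..n}"
  shows "(\<Sum>s | s permutes {1..n} \<and> cycle_type n s = cycle_type n s0.
           card (perm_centralizer n s)) = fact n"
proof -
  define F where "F = {s. s permutes {1..n} \<and> cycle_type n s = cycle_type n s0}"
  have finF: "finite F" unfolding F_def
    by (rule finite_subset[OF _ finite_permutations[of "{1..n}"]]) auto
  have "{w. w permutes {1..n}} \<subseteq> (\<Union>s\<in>F. conjugators n s0 s)"
  proof
    fix w assume "w \<in> {w. w permutes {1..n}}"
    hence w: "w permutes {1..n}" by simp
    have "w \<circ> s0 \<circ> inv' w \<in> F"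
      using cycle_type_conjugate[OF w s0] permutes_compose[OF permutes_inv[OF w]
          permutes_compose[OF s0 w]] by (simp add: F_def o_assoc)
    moreover have "w \<circ> s0 = (w \<circ> s0 \<circ> inv' w) \<circ> w"
      by (simp add: o_assoc[symmetric] permutes_inv_o(2)[OF w])
    ultimately show "w \<in> (\<Union>s\<in>F. conjugators n s0 s)" using w by (auto simp: conjugators_def)
  qed
  hence partition: "{w. w permutes {1..n}} = (\<Union>s\<in>F. conjugators n s0 s)"
    by (auto simp: conjugators_def)
  have "fact n = card (\<Union>s\<in>F. conjugators n s0 s)"
    using card_permutations[of "{1..n}" n] partition by simp
  also have "\<dots> = (\<Sum>s\<in>F. card (conjugators n s0 s))"
  proof (rule card_UN_disjoint[OF finF])
    show "\<forall>s\<in>F. finite (conjugators n s0 s)"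
      by (auto intro: finite_subset[OF _ finite_permutations[of "{1..n}"]] simp: conjugators_def)
    show "\<forall>s\<in>F. \<forall>s'\<in>F. s \<noteq> s' \<longrightarrow> conjugators n s0 s \<inter> conjugators n s0 s' = {}"
      using conjugators_disjoint by blast
  qed
  also have "\<dots> = (\<Sum>s\<in>F. card (perm_centralizer n s))"
  proof (rule sum.cong[OF refl])
    fix s assume "s \<in> F"
    then obtain h where "h permutes {1..n}" "h \<circ> s0 = s \<circ> h"
      using cycle_type_eq_conjugate[OF s0] by (auto simp: F_def)
    thus "card (conjugators n s0 s) = card (perm_centralizer n s)" by (rule card_conjugators)
  qed
  finally show ?thesis unfolding F_def by simp
qed

lemma sum_centralizer_le_types:
  assumes X: "X \<subseteq> {s. s permutes {1..n}}"
  shows "(\<Sum>s\<in>X. card (perm_centralizer n s)) \<le> fact n * card (cycle_type n ` X)"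
proof -
  have finX: "finite X" by (rule finite_subset[OF X finite_permutations]) simp
  have "(\<Sum>s\<in>X. card (perm_centralizer n s))
        = (\<Sum>\<tau>\<in>cycle_type n ` X. \<Sum>s\<in>{x \<in> X. cycle_type n x = \<tau>}. card (perm_centralizer n s))"
    by (rule sum.image_gen[OF finX])
  also have "\<dots> \<le> (\<Sum>\<tau>\<in>cycle_type n ` X. fact n)"
  proof (rule sum_mono)
    fix \<tau> assume "\<tau> \<in> cycle_type n ` X"
    then obtain s0 where s0: "s0 \<in> X" "\<tau> = cycle_type n s0" by auto
    have "(\<Sum>s\<in>{x \<in> X. cycle_type n x = \<tau>}. card (perm_centralizer n s))
        \<le> (\<Sum>s | s permutes {1..n} \<and> cycle_type n s = cycle_type n s0. card (perm_centralizer n s))"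
      by (rule sum_mono2) (use X s0 in \<open>auto intro: finite_subset[OF _ finite_permutations[of "{1..n}"]]\<close>)
    also have "\<dots> = fact n" using X s0(1) by (intro sum_centralizer_type_class) auto
    finally show "(\<Sum>s\<in>{x \<in> X. cycle_type n x = \<tau>}. card (perm_centralizer n s)) \<le> fact n" .
  qed
  finally show ?thesis by (simp add: mult.commute)
qed

lemma sum_centralizer_ge_types:
  assumes X: "X \<subseteq> {s. s permutes {1..n}}"
    and closed: "\<And>s g. s \<in> X \<Longrightarrow> g permutes {1..n} \<Longrightarrow> g \<circ> s \<circ> inv' g \<in> X"
  shows "fact n * card (cycle_type n ` X) \<le> (\<Sum>s\<in>X. card (perm_centralizer n s))"
proof -
  have finX: "finite X" by (rule finite_subset[OF X finite_permutations]) simp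
  have "(\<Sum>\<tau>\<in>cycle_type n ` X. fact n)
        \<le> (\<Sum>\<tau>\<in>cycle_type n ` X. \<Sum>s\<in>{x \<in> X. cycle_type n x = \<tau>}. card (perm_centralizer n s))"
  proof (rule sum_mono)
    fix \<tau> assume "\<tau> \<in> cycle_type n ` X"
    then obtain s0 where s0: "s0 \<in> X" "\<tau> = cycle_type n s0" by auto
    have s0p: "s0 permutes {1..n}" using X s0(1) by auto
    have "{s. s permutes {1..n} \<and> cycle_type n s = cycle_type n s0} \<subseteq> {x \<in> X. cycle_type n x = \<tau>}"
    proof clarify
      fix s assume s: "s permutes {1..n}" "cycle_type n s = cycle_type n s0"
      then obtain h where "h permutes {1..n}" "h \<circ> s0 = s \<circ> h"
        using cycle_type_eq_conjugate[OF s0p] by blast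
      hence "s \<in> X" using conjugate_eq closed[OF s0(1)] by metis
      thus "s \<in> X \<and> cycle_type n s = \<tau>" using s s0(2) by simp
    qed
    hence "(\<Sum>s | s permutes {1..n} \<and> cycle_type n s = cycle_type n s0. card (perm_centralizer n s))
        \<le> (\<Sum>s\<in>{x \<in> X. cycle_type n x = \<tau>}. card (perm_centralizer n s))"
      by (rule sum_mono2[rotated]) (use finX in auto)
    thus "fact n \<le> (\<Sum>s\<in>{x \<in> X. cycle_type n x = \<tau>}. card (perm_centralizer n s))"
      using sum_centralizer_type_class[OF s0p] by simp
  qed
  also have "\<dots> = (\<Sum>s\<in>X. card (perm_centralizer n s))"
    by (rule sum.image_gen[OF finX, symmetric])
  finally show ?thesis by (simp add: mult.commute)
qed


section \<open>Generating pairs: the upper bound for $A(n)$\<close>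

text \<open>$A_n$ is transitive on $\{1..n\}$ for $n \ge 3$: a suitable 3-cycle maps $a$ to
  $b$.\<close>

lemma alt_group_transitive:
  assumes "n \<ge> 3" "a \<in> {1..n}" "b \<in> {1..n}"
  shows "\<exists>g \<in> carrier (alt_group n). g a = b"
proof (cases "a = b")
  case True
  have "id \<in> carrier (alt_group n)" by (simp add: alt_group_carrier permutes_id evenperm_id)
  thus ?thesis using True by (intro bexI[of _ id]) auto
next
  case False
  have "card ({1..n} - {a, b}) = n - 2"
    using assms(2,3) False by (subst card_Diff_subset) auto
  have "{1..n} - {a, b} \<noteq> {}"
  proof
    assume "{1..n} - {a, b} = {}"
    hence "card ({1..n} - {a, b}) = 0" by (simp only: card.empty)
    hence "n - 2 = 0" using \<open>card ({1..n} - {a, b}) = n - 2\<close> by linarith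
    thus False using assms(1) by simp
  qed
  then obtain c where c: "c \<in> {1..n}" "c \<noteq> a" "c \<noteq> b" by blast
  have "cycle_of_list [a, b, c] \<in> three_cycles n"
    using False c assms(2,3) by (intro CollectI exI[of _ "[a, b, c]"]) auto
  hence "cycle_of_list [a, b, c] \<in> carrier (alt_group n)" using three_cycles_incl by blast
  moreover have "cycle_of_list [a, b, c] a = b" using False c by (simp add: transpose_def)
  ultimately show ?thesis by blast
qed

lemma generate_preserves_set:
  assumes gens: "\<And>g. g \<in> G \<Longrightarrow> g permutes {1..n} \<and> g ` V = V"
    and "h \<in> generate (sym_group n) G"
  shows "h ` V = V"
  using assms(2)
proof (induction rule: generate.induct)
  case one thus ?case by (simp add: sym_group_one)
next
  case (incl g) thus ?case using gens by blast
next
  case (inv g)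
  hence g: "g permutes {1..n}" "g ` V = V" using gens by auto
  have "inv' g ` (g ` V) = V" using permutes_inverses(2)[OF g(1)] by (simp add: image_comp)
  thus ?case using g by (simp add: sym_group_carrier)
next
  case (eng h1 h2)
  have "(h1 \<circ> h2) ` V = h1 ` (h2 ` V)" by (simp only: image_comp)
  thus ?case using eng.IH by (simp only: sym_group_mult)
qed

lemma perm_comm_relation:
  assumes "s permutes S" "t permutes S"
  shows "inv' (perm_comm s t) (s (t z)) = t (s z)"
proof -
  have "perm_comm s t (t (s z)) = s (t z)"
    unfolding perm_comm_apply using permutes_inverses(2)[OF assms(1)] permutes_inverses(2)[OF assms(2)]
    by simp
  thus ?thesis using permutes_inverses(2)[OF perm_comm_permutes[OF assms]] by metis
qed

lemma funpow_comp_outside: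
  fixes f s :: "'a \<Rightarrow> 'a"
  assumes "\<And>y. y \<notin> K \<Longrightarrow> f y = y" "\<And>m. (s ^^ m) x \<notin> K"
  shows "((f \<circ> s) ^^ m) x = (s ^^ m) x"
proof (induction m)
  case (Suc m)
  have "((f \<circ> s) ^^ Suc m) x = f (s (((f \<circ> s) ^^ m) x))" by simp
  also have "\<dots> = f ((s ^^ Suc m) x)" by (simp only: Suc.IH funpow.simps comp_apply)
  also have "\<dots> = (s ^^ Suc m) x" by (rule assms(1)[OF assms(2)])
  finally show ?case .
qed simp

lemma least_power_twisted:
  assumes "permutation s" "permutation u" "t permutes S"
    and "\<And>z. u (t z) = t (s z)" "\<And>m. (u ^^ m) x = (s ^^ m) x"
  shows "least_power s (inv' t x) = least_power s x"
proof -
  have "least_power u (t (inv' t x)) = least_power s (inv' t x)"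
    by (rule least_power_intertwine[OF assms(1,2) permutes_inj[OF assms(3)] assms(4)])
  moreover have "least_power u x = least_power s x"
    unfolding least_power_def using assms(5) by simp
  ultimately show ?thesis using permutes_inverses(1)[OF assms(3)] by simp
qed

definition foreign_points :: "nat \<Rightarrow> (nat \<Rightarrow> nat) \<Rightarrow> nat set \<Rightarrow> nat set" where
  "foreign_points n s K = {x \<in> {1..n}. least_power s x \<notin> least_power s ` K}"

lemma foreign_points_invariant:
  assumes s: "s permutes {1..n}" and t: "t permutes {1..n}"
    and supp: "\<And>y. y \<notin> K \<Longrightarrow> perm_comm s t y = y"
  shows "s ` foreign_points n s K = foreign_points n s K"
    and "t ` foreign_points n s K = foreign_points n s K"
proof -
  define V where "V = foreign_points n s K"
  define c where "c = perm_comm s t"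
  have ps: "permutation s" using permutes_imp_permutation[OF _ s] by simp
  have c: "c permutes {1..n}" unfolding c_def by (rule perm_comm_permutes[OF s t])
  have finV: "finite V" by (simp add: V_def foreign_points_def)
  have lp_V: "x \<in> V \<longleftrightarrow> x \<in> {1..n} \<and> least_power s x \<notin> least_power s ` K" for x
    by (simp add: V_def foreign_points_def)
  have "s ` V \<subseteq> V"
  proof
    fix y assume "y \<in> s ` V"
    then obtain x where x: "x \<in> V" "y = s x" by blast
    have "least_power s (s x) = least_power s x" using least_power_funpow[OF ps, of 1 x] by simp
    thus "y \<in> V" using x permutes_in_image[OF s, of x] by (simp add: lp_V)
  qed
  thus "s ` foreign_points n s K = foreign_points n s K"
    using endo_inj_surj[OF finV _ inj_on_subset[OF permutes_inj[OF s] subset_UNIV]]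
    unfolding V_def by simp
  have inv_c_fix: "inv' c y = y" if "y \<notin> K" for y
    using supp[OF that] permutes_inverses(2)[OF c, of y] unfolding c_def by simp
  have "inv' t x \<in> V" if x: "x \<in> V" for x
  proof -
    have avoid: "(s ^^ m) x \<notin> K" for m
    proof
      assume "(s ^^ m) x \<in> K"
      hence "least_power s ((s ^^ m) x) \<in> least_power s ` K" by (rule imageI)
      thus False using x least_power_funpow[OF ps] by (simp add: lp_V)
    qed
    have "((inv' c \<circ> s) ^^ m) x = (s ^^ m) x" for m
      by (rule funpow_comp_outside[where f = "inv' c" and K = K, OF inv_c_fix avoid])
    moreover have "(inv' c \<circ> s) (t z) = t (s z)" for z
      using perm_comm_relation[OF s t] unfolding c_def by simp
    moreover have "permutation (inv' c \<circ> s)"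
      using permutes_imp_permutation[OF _ permutes_compose[OF s permutes_inv[OF c]]] by simp
    ultimately have "least_power s (inv' t x) = least_power s x"
      by (intro least_power_twisted[OF ps _ t])
    moreover have "inv' t x \<in> {1..n}" using x permutes_in_image[OF permutes_inv[OF t]] by (auto simp: lp_V)
    ultimately show ?thesis using x by (simp add: lp_V)
  qed
  hence "inv' t ` V \<subseteq> V" by blast
  hence "inv' t ` V = V"
    using endo_inj_surj[OF finV _ inj_on_subset[OF permutes_inj[OF permutes_inv[OF t]] subset_UNIV]]
    by simp
  hence "t ` V = t ` (inv' t ` V)" by simp
  also have "\<dots> = (t \<circ> inv' t) ` V" by (simp only: image_comp)
  also have "\<dots> = V" by (simp add: permutes_inv_o(1)[OF t])
  finally show "t ` foreign_points n s K = foreign_points n s K" unfolding V_def .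
qed

lemma generating_pair_few_lengths:
  assumes n: "n \<ge> 3" and s: "s permutes {1..n}" and t: "t permutes {1..n}"
    and c3: "perm_comm s t \<in> three_cycles n"
    and gen: "carrier (alt_group n) \<subseteq> generate (sym_group n) {s, t}"
  shows "card (least_power s ` {1..n}) \<le> 3"
proof -
  obtain cs where cs: "perm_comm s t = cycle_of_list cs" "cycle cs" "length cs = 3" "set cs \<subseteq> {1..n}"
    using c3 by auto
  define K where "K = set cs"
  have cardK: "card K = 3" using cs(2,3) distinct_card unfolding K_def by fastforce
  have supp: "perm_comm s t y = y" if "y \<notin> K" for y
    using id_outside_supp[of y cs] that cs(1) unfolding K_def by simp
  define V where "V = foreign_points n s K"
  have stable: "g permutes {1..n} \<and> g ` V = V" if "g \<in> {s, t}" for g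
    using that foreign_points_invariant[OF s t, of K] supp s t unfolding V_def by auto
  have "V = {}"
  proof (rule ccontr)
    assume "V \<noteq> {}"
    then obtain a where a: "a \<in> V" by blast
    have "K \<noteq> {}" using cardK by auto
    then obtain b where b: "b \<in> K" by blast
    have "a \<in> {1..n}" "b \<in> {1..n}" using a b cs(4) by (auto simp: V_def K_def foreign_points_def)
    then obtain g where g: "g \<in> carrier (alt_group n)" "g a = b"
      using alt_group_transitive[OF n] by blast
    have "g ` V = V" by (rule generate_preserves_set[OF stable subsetD[OF gen g(1)]])
    hence "b \<in> V" using a g(2) by blast
    thus False using b by (auto simp: V_def foreign_points_def)
  qed
  hence "least_power s ` {1..n} \<subseteq> least_power s ` K" by (auto simp: V_def foreign_points_def)
  hence "card (least_power s ` {1..n}) \<le> card (least_power s ` K)"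
    by (rule card_mono[rotated]) (simp add: K_def)
  also have "\<dots> \<le> card K" by (rule card_image_le) (simp add: K_def)
  finally show ?thesis using cardK by simp
qed

definition few_lengths :: "nat \<Rightarrow> (nat \<Rightarrow> nat) set" where
  "few_lengths n = {s. s permutes {1..n} \<and> card (least_power s ` {1..n}) \<le> 3}"

lemma A_set_subset:
  assumes "n \<ge> 3"
  shows "A_set n \<subseteq> Sigma (few_lengths n) (three_partners n)"
proof clarify
  fix s t assume A: "(s, t) \<in> A_set n"
  hence st: "s permutes {1..n}" "t \<in> three_partners n s"
    by (auto simp: A_set_def B_set_Sigma)
  have "carrier (alt_group n) \<subseteq> carrier (sym_group n)"
    by (auto simp: alt_group_carrier sym_group_carrier)
  moreover have "generate (sym_group n) {s, t} = carrier (alt_group n)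
      \<or> generate (sym_group n) {s, t} = carrier (sym_group n)"
    using A by (simp add: A_set_def)
  ultimately have "carrier (alt_group n) \<subseteq> generate (sym_group n) {s, t}" by auto
  hence "card (least_power s ` {1..n}) \<le> 3"
    using generating_pair_few_lengths[OF assms st(1)] st(2) by (auto simp: three_partners_def)
  thus "s \<in> few_lengths n \<and> t \<in> three_partners n s" using st by (simp add: few_lengths_def)
qed

lemma subset_of_three:
  fixes L :: "nat set"
  assumes "finite L" "card L \<le> 3" "L \<subseteq> {0..n}"
  shows "\<exists>a b c. a \<le> n \<and> b \<le> n \<and> c \<le> n \<and> L \<subseteq> {a, b, c}"
proof -
  obtain xs where xs: "set xs = L" "distinct xs" using finite_distinct_list[OF assms(1)] by blast
  have len: "length xs \<le> 3" using distinct_card[OF xs(2)] xs(1) assms(2) by simp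
  define ys where "ys = xs @ [0, 0, 0]"
  have bound: "ys ! k \<le> n" if "k < 3" for k
  proof -
    have "ys ! k \<in> set ys" using that by (intro nth_mem) (simp add: ys_def)
    thus ?thesis using xs(1) assms(3) by (auto simp: ys_def)
  qed
  have "L \<subseteq> {ys ! 0, ys ! 1, ys ! 2}"
  proof
    fix v assume "v \<in> L"
    then obtain i where i: "i < length xs" "xs ! i = v" using xs(1) by (auto simp: in_set_conv_nth)
    hence "ys ! i = v" by (simp add: ys_def nth_append)
    moreover have "i = 0 \<or> i = 1 \<or> i = 2" using i(1) len by linarith
    ultimately show "v \<in> {ys ! 0, ys ! 1, ys ! 2}" by auto
  qed
  moreover have "ys ! 0 \<le> n" "ys ! 1 \<le> n" "ys ! 2 \<le> n" using bound by simp_all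
  ultimately show ?thesis by blast
qed

text \<open>A cycle type with at most three cycle lengths is given by three lengths and three
  multiplicities, all at most $n$.\<close>

lemma card_cycle_types_few_lengths: "card (cycle_type n ` few_lengths n) \<le> (n + 1) ^ 6"
proof -
  define f where "f = (\<lambda>(a :: nat, b :: nat, c :: nat, x :: nat, y :: nat, z :: nat).
        (\<lambda>l. if l = a then x else if l = b then y else if l = c then z else 0))"
  define N where "N = {0..n}"
  define P where "P = N \<times> N \<times> N \<times> N \<times> N \<times> N"
  have finP: "finite P" by (simp add: P_def N_def)
  have type_le: "cycle_type n s l \<le> n" for s l
  proof -
    have "cycle_type n s l \<le> card {1..n}" unfolding cycle_type_def by (rule card_mono) auto
    thus ?thesis by simp
  qed
  have "cycle_type n ` few_lengths n \<subseteq> f ` P"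
  proof
    fix \<tau> assume "\<tau> \<in> cycle_type n ` few_lengths n"
    then obtain s where s: "s permutes {1..n}" "card (least_power s ` {1..n}) \<le> 3" "\<tau> = cycle_type n s"
      by (auto simp: few_lengths_def)
    have "least_power s ` {1..n} \<subseteq> {0..n}"
    proof clarify
      fix x :: nat assume "x \<in> {1..n}"
      hence "least_power s x \<le> card {1..n}" by (rule least_power_le_card[OF s(1) finite_atLeastAtMost])
      thus "least_power s x \<in> {0..n}" by simp
    qed
    then obtain a b c where abc: "a \<le> n" "b \<le> n" "c \<le> n" "least_power s ` {1..n} \<subseteq> {a, b, c}"
      using subset_of_three[OF _ s(2)] by blast
    have "cycle_type n s l = 0" if "l \<notin> {a, b, c}" for l
    proof -
      have "{x \<in> {1..n}. least_power s x = l} = {}" using abc(4) that by blast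
      thus ?thesis by (simp add: cycle_type_def)
    qed
    hence "cycle_type n s l = f (a, b, c, cycle_type n s a, cycle_type n s b, cycle_type n s c) l" for l
      by (cases "l = a \<or> l = b \<or> l = c") (auto simp: f_def)
    hence "cycle_type n s = f (a, b, c, cycle_type n s a, cycle_type n s b, cycle_type n s c)" ..
    moreover have "(a, b, c, cycle_type n s a, cycle_type n s b, cycle_type n s c) \<in> P"
      using abc type_le by (simp add: P_def N_def)
    ultimately show "\<tau> \<in> f ` P" using s(3) by blast
  qed
  hence "card (cycle_type n ` few_lengths n) \<le> card (f ` P)" by (rule card_mono[OF finite_imageI[OF finP]])
  also have "\<dots> \<le> card P" by (rule card_image_le[OF finP])
  also have "\<dots> = (n + 1) ^ 6" by (simp add: P_def N_def card_cartesian_product eval_nat_numeral)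
  finally show ?thesis .
qed

lemma card_A_set_le:
  assumes "n \<ge> 3"
  shows "card (A_set n) \<le> n ^ 3 * (n + 1) ^ 6 * fact n"
proof -
  have finF: "finite (few_lengths n)"
    by (rule finite_subset[OF _ finite_permutations[of "{1..n}"]]) (auto simp: few_lengths_def)
  have perms: "few_lengths n \<subseteq> {s. s permutes {1..n}}" by (auto simp: few_lengths_def)
  have "card (A_set n) \<le> card (Sigma (few_lengths n) (three_partners n))"
    by (rule card_mono[OF _ A_set_subset[OF assms]]) (use finF finite_three_partners in auto)
  also have "\<dots> = (\<Sum>s\<in>few_lengths n. card (three_partners n s))"
    using card_SigmaI[OF finF, of "three_partners n"] finite_three_partners by simp
  also have "\<dots> \<le> (\<Sum>s\<in>few_lengths n. n ^ 3 * card (perm_centralizer n s))"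
    using card_three_partners_le perms by (intro sum_mono) auto
  also have "\<dots> = n ^ 3 * (\<Sum>s\<in>few_lengths n. card (perm_centralizer n s))"
    by (simp add: sum_distrib_left)
  also have "\<dots> \<le> n ^ 3 * (fact n * card (cycle_type n ` few_lengths n))"
    using sum_centralizer_le_types[OF perms] by simp
  also have "\<dots> \<le> n ^ 3 * (fact n * (n + 1) ^ 6)"
    using card_cycle_types_few_lengths by simp
  finally show ?thesis by (simp add: ac_simps)
qed


section \<open>Many cycle types: the lower bound for $B(n)$\<close>

text \<open>For $D \subseteq \{3..k\}$, the permutation swapping 1 and 2 and rotating each block
  $\{d^2 ..< d^2 + d\}$, $d \in D$, cyclically.\<close>

definition block_perm :: "nat set \<Rightarrow> nat \<Rightarrow> nat" where
  "block_perm D x =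
     (if x = 1 then 2 else if x = 2 then 1
      else if floor_sqrt x \<in> D \<and> x < (floor_sqrt x)\<^sup>2 + floor_sqrt x
      then (floor_sqrt x)\<^sup>2 + (x - (floor_sqrt x)\<^sup>2 + 1) mod floor_sqrt x
      else x)"

lemma floor_sqrt_block: "r \<le> 2 * d \<Longrightarrow> floor_sqrt (d\<^sup>2 + r) = d"
  by (rule floor_sqrt_unique) (simp_all add: power2_eq_square)

lemma block_perm_block:
  assumes "d \<in> D" "3 \<le> d" "r < d"
  shows "block_perm D (d\<^sup>2 + r) = d\<^sup>2 + (r + 1) mod d"
proof -
  have "9 \<le> d\<^sup>2" using power_mono[OF assms(2), of 2] by simp
  moreover have "floor_sqrt (d\<^sup>2 + r) = d" using assms(3) by (intro floor_sqrt_block) simp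
  ultimately show ?thesis using assms by (simp add: block_perm_def)
qed

lemma block_perm_funpow:
  assumes "d \<in> D" "3 \<le> d" "r < d"
  shows "(block_perm D ^^ j) (d\<^sup>2 + r) = d\<^sup>2 + (r + j) mod d"
proof (induction j)
  case (Suc j)
  have "(r + j) mod d < d" using assms(3) by simp
  thus ?case using Suc block_perm_block[OF assms(1,2)] by (simp add: mod_Suc_eq)
qed (use assms(3) in simp)

lemma block_perm_cases:
  obtains (swap) "x \<in> {1, 2}" "(block_perm D ^^ 2) x = x"
  | (block) d r where "d \<in> D" "r < d" "x = d\<^sup>2 + r"
  | (fixed) "block_perm D x = x"
proof -
  consider "x \<in> {1, 2}"
    | "x \<notin> {1, 2}" "floor_sqrt x \<in> D" "x < (floor_sqrt x)\<^sup>2 + floor_sqrt x"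
    | "x \<notin> {1, 2}" "\<not> (floor_sqrt x \<in> D \<and> x < (floor_sqrt x)\<^sup>2 + floor_sqrt x)"
    by blast
  thus ?thesis
  proof cases
    case 1
    thus ?thesis using swap by (auto simp: block_perm_def numeral_2_eq_2)
  next
    case 2
    thus ?thesis using block[of "floor_sqrt x" "x - (floor_sqrt x)\<^sup>2"] floor_sqrt_power2_le[of x]
      by simp
  next
    case 3
    thus ?thesis using fixed by (auto simp: block_perm_def)
  qed
qed

lemma block_perm_small:
  assumes "\<forall>d\<in>D. 3 \<le> d"
  shows "block_perm D 1 = 2" "block_perm D 2 = 1" "block_perm D 3 = 3"
proof -
  have "floor_sqrt 3 = 1" by (rule floor_sqrt_unique) (simp_all add: power2_eq_square)
  thus "block_perm D 1 = 2" "block_perm D 2 = 1" "block_perm D 3 = 3"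
    using assms by (auto simp: block_perm_def)
qed

lemma funpow_period_dvd:
  assumes "(f ^^ p) x = x" "p dvd N"
  shows "(f ^^ N) x = x"
  using funpow_mod_eq[OF assms(1), of N] assms(2) by simp

text \<open>Every point is periodic with period dividing $2 \prod D$, so the map is a
  bijection.\<close>

lemma block_perm_period:
  assumes "finite D" "\<forall>d\<in>D. 3 \<le> d"
  shows "block_perm D ^^ (2 * \<Prod>D) = id"
proof
  fix x
  show "(block_perm D ^^ (2 * \<Prod>D)) x = id x"
  proof (cases rule: block_perm_cases[of x D])
    case swap
    thus ?thesis using funpow_period_dvd[where p = 2 and N = "2 * \<Prod>D"] by simp
  next
    case (block d r)
    have "d dvd 2 * \<Prod>D" using dvd_prodI[OF assms(1) block(1), of id] by simp
    hence "(r + 2 * \<Prod>D) mod d = r" using block(2) by (simp add: mod_add_right_eq[symmetric])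
    thus ?thesis using block_perm_funpow[OF block(1) _ block(2)] assms(2) block(1,3) by simp
  next
    case fixed
    thus ?thesis using funpow_period_dvd[where p = 1 and N = "2 * \<Prod>D"] by simp
  qed
qed

lemma block_perm_permutes:
  assumes "D \<subseteq> {3..k}" "(k + 1)\<^sup>2 \<le> n" "3 \<le> n"
  shows "block_perm D permutes {1..n}"
proof -
  have D3: "\<forall>d\<in>D. 3 \<le> d" and finD: "finite D" using assms(1) finite_subset by auto
  define N where "N = 2 * \<Prod>D"
  have "N > 0" using D3 by (auto simp: N_def intro!: prod_pos)
  have "block_perm D \<circ> block_perm D ^^ (N - 1) = id" "block_perm D ^^ (N - 1) \<circ> block_perm D = id"
    using block_perm_period[OF finD D3] \<open>N > 0\<close> funpow_Suc_right[of "N - 1" "block_perm D"]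
    unfolding N_def[symmetric] by (simp_all del: funpow.simps add: funpow.simps(2)[symmetric])
  hence "bij (block_perm D)" by (intro o_bij)
  moreover have "block_perm D x = x" if "x \<notin> {1..n}" for x
  proof -
    have "x = 0 \<or> n < x" using that by auto
    moreover have "x < (floor_sqrt x)\<^sup>2 + floor_sqrt x \<Longrightarrow> floor_sqrt x \<in> D \<Longrightarrow> x < n"
    proof -
      assume x: "x < (floor_sqrt x)\<^sup>2 + floor_sqrt x" "floor_sqrt x \<in> D"
      hence "floor_sqrt x \<le> k" using assms(1) by auto
      hence "floor_sqrt x * floor_sqrt x \<le> k * k" using mult_le_mono by blast
      hence "(floor_sqrt x)\<^sup>2 + floor_sqrt x < (k + 1)\<^sup>2"
        using \<open>floor_sqrt x \<le> k\<close> by (simp add: power2_eq_square)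
      thus "x < n" using x(1) assms(2) by linarith
    qed
    ultimately show ?thesis using assms(2,3) D3 by (auto simp: block_perm_def)
  qed
  ultimately show ?thesis by (simp add: permutes_def bij_iff)
qed

lemma least_power_block_perm:
  assumes "permutation (block_perm D)" "d \<in> D" "3 \<le> d" "r < d"
  shows "least_power (block_perm D) (d\<^sup>2 + r) = d"
proof -
  let ?L = "least_power (block_perm D) (d\<^sup>2 + r)"
  have "(block_perm D ^^ d) (d\<^sup>2 + r) = d\<^sup>2 + r" using block_perm_funpow[OF assms(2-4)] assms(4) by simp
  hence "?L dvd d" using least_power_dvd[OF assms(1)] by blast
  moreover have "(block_perm D ^^ ?L) (d\<^sup>2 + r) = d\<^sup>2 + r"
    by (rule least_power_of_permutation(1)[OF assms(1)])
  hence "(r + ?L) mod d = r mod d" using block_perm_funpow[OF assms(2-4)] assms(4) by simp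
  hence "d dvd ?L" using mod_eq_dvd_iff_nat[of r "r + ?L" d] by simp
  ultimately show ?thesis by (rule dvd_antisym)
qed

lemma least_power_block_perm_range:
  assumes "permutation (block_perm D)" "\<forall>d\<in>D. 3 \<le> d"
  shows "least_power (block_perm D) x \<in> {1, 2} \<union> D"
proof (cases rule: block_perm_cases[of x D])
  case swap
  hence "least_power (block_perm D) x dvd 2" using least_power_dvd[OF assms(1)] by blast
  hence "least_power (block_perm D) x \<le> 2" by (rule dvd_imp_le) simp
  thus ?thesis using least_power_of_permutation(2)[OF assms(1), of x] by auto
next
  case (block d r)
  thus ?thesis using least_power_block_perm[OF assms(1)] assms(2) by simp
next
  case fixed
  hence "least_power (block_perm D) x dvd 1" using least_power_dvd[OF assms(1), of x 1] by simp
  thus ?thesis by simp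
qed

lemma cycle_type_block_perm:
  assumes "D \<subseteq> {3..k}" "(k + 1)\<^sup>2 \<le> n" "3 \<le> n" "3 \<le> d"
  shows "cycle_type n (block_perm D) d > 0 \<longleftrightarrow> d \<in> D"
proof -
  have perm: "permutation (block_perm D)"
    using permutes_imp_permutation[OF _ block_perm_permutes[OF assms(1-3)]] by simp
  have D3: "\<forall>d\<in>D. 3 \<le> d" using assms(1) by auto
  show ?thesis
  proof
    assume "cycle_type n (block_perm D) d > 0"
    then obtain x where "least_power (block_perm D) x = d"
      unfolding cycle_type_def by (metis (mono_tags, lifting) card.empty empty_Collect_eq less_irrefl)
    thus "d \<in> D" using least_power_block_perm_range[OF perm D3, of x] assms(4) by auto
  next
    assume d: "d \<in> D"
    have "d \<le> k" using d assms(1) by auto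
    hence "d\<^sup>2 \<le> n" using assms(2) power_mono[of d "k + 1" 2] by linarith
    moreover have "1 \<le> d\<^sup>2" using assms(4) by simp
    moreover have "least_power (block_perm D) (d\<^sup>2 + 0) = d"
      using assms(4) by (intro least_power_block_perm[OF perm d assms(4)]) simp
    ultimately have "d\<^sup>2 \<in> {x \<in> {1..n}. least_power (block_perm D) x = d}" by simp
    thus "cycle_type n (block_perm D) d > 0" unfolding cycle_type_def by (auto simp: card_gt_0_iff)
  qed
qed

lemma inj_on_cycle_type_block_perm:
  assumes "(k + 1)\<^sup>2 \<le> n" "3 \<le> n"
  shows "inj_on (\<lambda>D. cycle_type n (block_perm D)) (Pow {3..k})"
proof (rule inj_onI)
  fix D1 D2 assume D: "D1 \<in> Pow {3..k}" "D2 \<in> Pow {3..k}"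
    and eq: "cycle_type n (block_perm D1) = cycle_type n (block_perm D2)"
  have "d \<in> D1 \<longleftrightarrow> d \<in> D2" if "3 \<le> d" for d
    using cycle_type_block_perm[OF _ assms that, of D1] cycle_type_block_perm[OF _ assms that, of D2] D eq
    by auto
  thus "D1 = D2" using D by auto
qed

text \<open>A permutation swapping 1 and 2 and fixing 3 has the partner $(2\,3)$: the commutator
  is $(1\,3)(2\,3)$.\<close>

lemma transposition_partner:
  assumes s: "s permutes {1..n}" and n: "3 \<le> n" and "s 1 = 2" "s 2 = 1" "s 3 = 3"
  shows "transpose 2 3 \<in> three_partners n s"
proof -
  have inv_s: "inv' s 1 = 2" "inv' s 3 = 3"
    using permutes_inverses(2)[OF s, of 2] permutes_inverses(2)[OF s, of 3] assms(3-5) by simp_all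
  have conj: "s \<circ> transpose 2 3 \<circ> inv' s = transpose 1 3"
  proof
    fix x :: nat
    consider "x = 1" | "x = 3" | "x \<noteq> 1" "x \<noteq> 3" by blast
    thus "(s \<circ> transpose 2 3 \<circ> inv' s) x = transpose 1 3 x"
    proof cases
      case 3
      have "inv' s x \<noteq> 2" "inv' s x \<noteq> 3"
        using permutes_inverses(1)[OF s, of x] 3 assms(4,5) by metis+
      thus ?thesis using 3 permutes_inverses(1)[OF s, of x] by simp
    qed (use inv_s assms(4,5) in simp_all)
  qed
  have "perm_comm s (transpose 2 3) = transpose 1 3 \<circ> transpose 2 3"
    unfolding perm_comm_def using conj by simp
  also have "\<dots> = cycle_of_list [1, 3, 2]" by (simp add: transpose_commute)
  finally have "perm_comm s (transpose 2 3) \<in> three_cycles n"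
    using n by (intro CollectI exI[of _ "[1, 3, 2]"]) auto
  moreover have "transpose 2 3 permutes {1..n}" by (rule permutes_swap_id) (use n in auto)
  ultimately show ?thesis by (simp add: three_partners_def)
qed

text \<open>The permutations having a partner form a conjugation-closed set with at least
  $2^{k-2}$ cycle types.\<close>

lemma card_B_set_ge:
  assumes n: "3 \<le> n" and k: "(k + 1)\<^sup>2 \<le> n"
  shows "2 ^ (k - 2) * fact n \<le> card (B_set n)"
proof -
  define Y where "Y = {s. s permutes {1..n} \<and> three_partners n s \<noteq> {}}"
  have perms: "Y \<subseteq> {s. s permutes {1..n}}" by (auto simp: Y_def)
  have finP: "finite {s. s permutes {1..n::nat}}" by (simp add: finite_permutations)
  have closed: "g \<circ> s \<circ> inv' g \<in> Y" if "s \<in> Y" "g permutes {1..n}" for s g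
  proof -
    have "s permutes {1..n}" "three_partners n s \<noteq> {}" using that(1) by (auto simp: Y_def)
    then obtain t where s: "s permutes {1..n}" "t \<in> three_partners n s" by blast
    have "g \<circ> s \<circ> inv' g permutes {1..n}" by (intro permutes_compose permutes_inv that(2) s(1))
    thus ?thesis using three_partners_conj[OF that(2) s] by (auto simp: Y_def)
  qed
  have "2 ^ (k - 2) = card (Pow {3..k})" by (simp add: card_Pow)
  also have "\<dots> \<le> card (cycle_type n ` Y)"
  proof (rule card_inj_on_le[OF inj_on_cycle_type_block_perm[OF k n]])
    show "finite (cycle_type n ` Y)" using finite_subset[OF perms finP] by simp
    show "(\<lambda>D. cycle_type n (block_perm D)) ` Pow {3..k} \<subseteq> cycle_type n ` Y"
    proof clarify
      fix D assume D: "D \<subseteq> {3..k}"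
      have p: "block_perm D permutes {1..n}" by (rule block_perm_permutes[OF D k n])
      have "\<forall>d\<in>D. 3 \<le> d" using D by auto
      hence "transpose 2 3 \<in> three_partners n (block_perm D)"
        using transposition_partner[OF p n] block_perm_small by blast
      hence "block_perm D \<in> Y" using p by (auto simp: Y_def)
      thus "cycle_type n (block_perm D) \<in> cycle_type n ` Y" by blast
    qed
  qed
  finally have "2 ^ (k - 2) * fact n \<le> fact n * card (cycle_type n ` Y)" by simp
  also have "\<dots> \<le> (\<Sum>s\<in>Y. card (perm_centralizer n s))"
    by (rule sum_centralizer_ge_types[OF perms closed])
  also have "\<dots> \<le> (\<Sum>s\<in>Y. card (three_partners n s))"
    using card_perm_centralizer_le by (intro sum_mono) (auto simp: Y_def)
  also have "\<dots> \<le> (\<Sum>s | s permutes {1..n}. card (three_partners n s))"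
    by (rule sum_mono2[OF finP perms]) simp
  also have "\<dots> = card (B_set n)"
    unfolding B_set_Sigma using card_SigmaI[OF finP, of "three_partners n"] finite_three_partners
    by simp
  finally show ?thesis .
qed

section \<open>The limit\<close>

text \<open>With $k = \lfloor\sqrt n\rfloor - 1$ the two bounds give
  $\#A(n)/\#B(n) \le n^3 (n+1)^6 / 2^{k-2} \le (n+1)^9 / 2^{\sqrt n - 4}$.\<close>

lemma ratio_bound:
  assumes n: "16 \<le> n"
  shows "real (card (A_set n)) / real (card (B_set n)) \<le> (real n + 1) ^ 9 / 2 powr (sqrt (real n) - 4)"
proof -
  define k where "k = floor_sqrt n - 1"
  have fs: "4 \<le> floor_sqrt n" using n by (simp add: le_floor_sqrt_iff)
  have "k + 1 = floor_sqrt n" using fs by (simp add: k_def)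
  hence k: "(k + 1)\<^sup>2 \<le> n" using floor_sqrt_power2_le[of n] by simp
  have "n < (floor_sqrt n + 1)\<^sup>2" using Suc_floor_sqrt_power2_gt[of n] by simp
  hence "real n < real ((floor_sqrt n + 1)\<^sup>2)" by (simp only: of_nat_less_iff)
  hence "sqrt (real n) < sqrt ((real (floor_sqrt n) + 1)\<^sup>2)"
    by (intro real_sqrt_less_mono) (simp add: add.commute)
  hence "sqrt (real n) < real (floor_sqrt n) + 1" by simp
  hence "2 powr (sqrt (real n) - 4) \<le> 2 powr real (k - 2)"
    using fs by (intro powr_mono) (auto simp: k_def)
  hence pow: "2 powr (sqrt (real n) - 4) \<le> 2 ^ (k - 2)" by (simp add: powr_realpow)
  have "card (A_set n) \<le> n ^ 3 * (n + 1) ^ 6 * fact n" using n by (intro card_A_set_le) simp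
  hence "real (card (A_set n)) \<le> real (n ^ 3 * (n + 1) ^ 6 * fact n)" by (simp only: of_nat_le_iff)
  hence A: "real (card (A_set n)) \<le> real n ^ 3 * (real n + 1) ^ 6 * fact n"
    by (simp add: add.commute)
  have "2 ^ (k - 2) * fact n \<le> card (B_set n)" using n k by (intro card_B_set_ge) simp_all
  hence "real (2 ^ (k - 2) * fact n) \<le> real (card (B_set n))" by (simp only: of_nat_le_iff)
  hence B: "2 ^ (k - 2) * fact n \<le> real (card (B_set n))" by simp
  have "real (card (A_set n)) / real (card (B_set n))
        \<le> (real n ^ 3 * (real n + 1) ^ 6 * fact n) / (2 ^ (k - 2) * fact n)"
    by (rule frac_le) (use A B in auto)
  also have "\<dots> = real n ^ 3 * (real n + 1) ^ 6 / 2 ^ (k - 2)" by simp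
  also have "\<dots> \<le> (real n + 1) ^ 9 / 2 powr (sqrt (real n) - 4)"
  proof (rule frac_le)
    have "real n ^ 3 * (real n + 1) ^ 6 \<le> (real n + 1) ^ 3 * (real n + 1) ^ 6"
      by (intro mult_right_mono power_mono) auto
    thus "real n ^ 3 * (real n + 1) ^ 6 \<le> (real n + 1) ^ 9" by (simp add: power_add[symmetric])
  qed (use pow in auto)
  finally show ?thesis .
qed

theorem mainTheorem20:
  shows "(\<lambda>n. real (card (A_set n)) / real (card (B_set n))) \<longlonglongrightarrow> 0"
proof (rule tendsto_sandwich[of "\<lambda>_. 0" _ _ "\<lambda>n. (real n + 1) ^ 9 / 2 powr (sqrt (real n) - 4)"])
  show "\<forall>\<^sub>F n in sequentially. 0 \<le> real (card (A_set n)) / real (card (B_set n))" by simp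
  show "\<forall>\<^sub>F n in sequentially. real (card (A_set n)) / real (card (B_set n))
          \<le> (real n + 1) ^ 9 / 2 powr (sqrt (real n) - 4)"
    using ratio_bound by (auto simp: eventually_sequentially)
  show "(\<lambda>_. 0) \<longlonglongrightarrow> (0 :: real)" by simp
  show "(\<lambda>n. (real n + 1) ^ 9 / 2 powr (sqrt (real n) - 4)) \<longlonglongrightarrow> 0" by real_asymp
qed


end
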